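(* Let $H=(T_1,\dots,T_n,p_1,\dots,p_n)$ be a strategic game with a belief structure satisfying property A. Then, for the operator $\overline{GR}$ on the lattice of restrictions of $H$: (i) the largest fixpoint of $\overline{GR}$ exists and equals its outcome; (ii) $\overline{GR}$ is order independent; (iii) for every relaxation $R$ of $\overline{GR}$ and every ordinal $\alpha$, $\overline{GR}^{\alpha}\subseteq R^{\alpha}$.
   Context: A strategic game $H=(T_1,\dots,T_n,p_1,\dots,p_n)$, $n>1$, has nonempty strategy sets $T_i$ and payoffs $p_i:T_1\times\dots\times T_n\to\mathbb R$. A restriction of $H$ is $G=(S_1,\dots,S_n)$ with each $S_i\subseteq T_i$ (possibly empty); restrictions form a complete lattice under componentwise inclusion with top element $H=(T_1,\dots,T_n)$, meets/joins being componentwise intersections/unions. A belief structure assigns to each player $i$ a nonempty set $\mathcal B_i$ of beliefs, an expected payoff $p_i:T_i\times\mathcal B_i\to\mathbb R$, and for each restriction $G$ a set $\mathcal B_i\,\dot\cap\,G\subseteq\mathcal B_i$ (beliefs of $i$ in $G$), with $\mathcal B_i\,\dot\cap\,H=\mathcal B_i$. Property A: if $G_1\subseteq G_2\subseteq H$ then $\mathcal B_i\,\dot\cap\,G_1\subseteq\mathcal B_i\,\dot\cap\,G_2$ for all $i$. For $G=(S_1,\dots,S_n)$ and $\mu_i\in\mathcal B_i$, $s_i\in T_i$ is a best response to $\mu_i$ in $G$, written $s_i\in BR_G(\mu_i)$, if $p_i(s_i,\mu_i)\ge p_i(s_i',\mu_i)$ for all $s_i'\in S_i$ (note $s_i$ need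 not lie in $S_i$). The operator $GR$ maps $G$ to $(S_1',\dots,S_n')$ with $S_i':=\{s_i\in T_i\mid \exists\mu_i\in\mathcal B_i\,\dot\cap\,G:\ s_i\in BR_H(\mu_i)\}$, and $\overline{GR}(G):=GR(G)\cap G$. Operator notions on a complete lattice: fixpoint $T(G)=G$; monotonic: $G_1\subseteq G_2\Rightarrow T(G_1)\subseteq T(G_2)$; iterations $T^0:=\top$, $T^{\alpha+1}:=T(T^\alpha)$, $T^\beta:=\bigcap_{\alpha<\beta}T^\alpha$ for limit $\beta$; outcome $T^{\alpha_T}$ where $\alpha_T$ is the least $\alpha$ with $T^{\alpha+1}=T^\alpha$. $R$ is a relaxation of $T$ if for all ordinals $\alpha$: (1) $T(R^\alpha)\subseteq R(R^\alpha)$; (2) if $T(R^\alpha)\subseteq R^\alpha$ then $R(R^\alpha)\subseteq R^\alpha$; (3) if $R^\alpha$ is a fixpoint of $R$ then it is a fixpoint of $T$. $T$ is order independent if the set of outcomes of relaxations of $T$ has at most one element. *)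

theory Defs
  imports Complex_Main
begin

(* Players are 0..<n.  A strategic game is given by its strategy sets
   T :: nat => 's set, normalised so that T i = {} for i >= n.
   A restriction is G :: nat => 's set with G i \<subseteq> T i (and G i = {} for i >= n);
   the lattice order is the pointwise order \<le> on functions, top element T. *)

definition strategic_game :: "nat \<Rightarrow> (nat \<Rightarrow> 's set) \<Rightarrow> bool" where
  "strategic_game n T \<longleftrightarrow> 1 < n \<and> (\<forall>i<n. T i \<noteq> {}) \<and> (\<forall>i. n \<le> i \<longrightarrow> T i = {})"

definition is_restr :: "nat \<Rightarrow> (nat \<Rightarrow> 's set) \<Rightarrow> (nat \<Rightarrow> 's set) \<Rightarrow> bool" where
  "is_restr n T G \<longleftrightarrow> (\<forall>i<n. G i \<subseteq> T i) \<and> (\<forall>i. n \<le> i \<longrightarrow> G i = {})"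

definition is_operator :: "nat \<Rightarrow> (nat \<Rightarrow> 's set) \<Rightarrow> ((nat \<Rightarrow> 's set) \<Rightarrow> (nat \<Rightarrow> 's set)) \<Rightarrow> bool" where
  "is_operator n T R \<longleftrightarrow> (\<forall>G. is_restr n T G \<longrightarrow> is_restr n T (R G))"

(* belief structure: beliefs B i (nonempty), beliefs in G: Bin i G \<subseteq> B i, Bin i T = B i.
   The expected payoff ep :: nat => 's => 'b => real is an arbitrary function. *)
definition belief_structure ::
  "nat \<Rightarrow> (nat \<Rightarrow> 's set) \<Rightarrow> (nat \<Rightarrow> 'b set) \<Rightarrow> (nat \<Rightarrow> (nat \<Rightarrow> 's set) \<Rightarrow> 'b set) \<Rightarrow> bool" where
  "belief_structure n T B Bin \<longleftrightarrow>
     (\<forall>i<n. B i \<noteq> {}) \<and>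
     (\<forall>i<n. \<forall>G. is_restr n T G \<longrightarrow> Bin i G \<subseteq> B i) \<and>
     (\<forall>i<n. Bin i T = B i)"

definition property_A ::
  "nat \<Rightarrow> (nat \<Rightarrow> 's set) \<Rightarrow> (nat \<Rightarrow> (nat \<Rightarrow> 's set) \<Rightarrow> 'b set) \<Rightarrow> bool" where
  "property_A n T Bin \<longleftrightarrow>
     (\<forall>G1 G2. is_restr n T G1 \<and> is_restr n T G2 \<and> G1 \<le> G2 \<longrightarrow> (\<forall>i<n. Bin i G1 \<subseteq> Bin i G2))"

(* s is a best response of player i to belief mu in restriction G (s need not lie in G i) *)
definition best_resp :: "(nat \<Rightarrow> 's \<Rightarrow> 'b \<Rightarrow> real) \<Rightarrow> nat \<Rightarrow> (nat \<Rightarrow> 's set) \<Rightarrow> 'b \<Rightarrow> 's \<Rightarrow> bool" where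
  "best_resp ep i G mu s \<longleftrightarrow> (\<forall>s'\<in>G i. ep i s' mu \<le> ep i s mu)"

definition GR :: "nat \<Rightarrow> (nat \<Rightarrow> 's set) \<Rightarrow> (nat \<Rightarrow> 's \<Rightarrow> 'b \<Rightarrow> real)
    \<Rightarrow> (nat \<Rightarrow> (nat \<Rightarrow> 's set) \<Rightarrow> 'b set) \<Rightarrow> (nat \<Rightarrow> 's set) \<Rightarrow> (nat \<Rightarrow> 's set)" where
  "GR n T ep Bin G = (\<lambda>i. if i < n then {s \<in> T i. \<exists>mu\<in>Bin i G. best_resp ep i T mu s} else {})"

definition GRbar :: "nat \<Rightarrow> (nat \<Rightarrow> 's set) \<Rightarrow> (nat \<Rightarrow> 's \<Rightarrow> 'b \<Rightarrow> real)
    \<Rightarrow> (nat \<Rightarrow> (nat \<Rightarrow> 's set) \<Rightarrow> 'b set) \<Rightarrow> (nat \<Rightarrow> 's set) \<Rightarrow> (nat \<Rightarrow> 's set)" where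
  "GRbar n T ep Bin G = (\<lambda>i. GR n T ep Bin G i \<inter> G i)"

(* Transfinite iteration of R starting from the top T, indexed by elements of a
   well-ordered type 'o (element x represents the ordinal = order type of {y. y < x}).
   Successor x of y:  T^x = R (T^y);  otherwise (0 or limit): meet of all earlier
   iterates in the lattice of restrictions (the meet of the empty family is T). *)
definition iter :: "(nat \<Rightarrow> 's set) \<Rightarrow> ((nat \<Rightarrow> 's set) \<Rightarrow> (nat \<Rightarrow> 's set)) \<Rightarrow> 'o::wellorder \<Rightarrow> (nat \<Rightarrow> 's set)" where
  "iter T R = wfrec {(y, x). y < x}
     (\<lambda>f x. if (\<exists>y. y < x \<and> (\<forall>z. y < z \<longrightarrow> x \<le> z))
            then R (f (THE y. y < x \<and> (\<forall>z. y < z \<longrightarrow> x \<le> z)))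
            else (\<lambda>i. T i \<inter> (\<Inter>y\<in>{y. y < x}. f y i)))"

(* x is the outcome index alpha_R: least index with R^(x+1) = R^x, i.e. R(R^x) = R^x *)
definition outcome_at :: "(nat \<Rightarrow> 's set) \<Rightarrow> ((nat \<Rightarrow> 's set) \<Rightarrow> (nat \<Rightarrow> 's set)) \<Rightarrow> 'o::wellorder \<Rightarrow> bool" where
  "outcome_at T R x \<longleftrightarrow> R (iter T R x) = iter T R x \<and> (\<forall>y<x. R (iter T R y) \<noteq> iter T R y)"

definition relax_cond :: "(nat \<Rightarrow> 's set) \<Rightarrow> ((nat \<Rightarrow> 's set) \<Rightarrow> (nat \<Rightarrow> 's set))
    \<Rightarrow> ((nat \<Rightarrow> 's set) \<Rightarrow> (nat \<Rightarrow> 's set)) \<Rightarrow> 'o::wellorder \<Rightarrow> bool" where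
  "relax_cond T Op R x \<longleftrightarrow>
     Op (iter T R x) \<le> R (iter T R x) \<and>
     (Op (iter T R x) \<le> iter T R x \<longrightarrow> R (iter T R x) \<le> iter T R x) \<and>
     (R (iter T R x) = iter T R x \<longrightarrow> Op (iter T R x) = iter T R x)"

end

theory Submission
  imports Defs
begin

(* GRbar is contracting, and property A makes it monotonic on restrictions.  For such an
   operator the union F of all its fixpoints is again a fixpoint, hence the largest one, and by
   monotonicity F lies below every iterate.  A relaxation R dominates GRbar at each stage, so by
   transfinite induction every iterate of GRbar lies below the corresponding iterate of R; a
   fixpoint of R is a fixpoint of GRbar, hence below F, and above F by the previous step.  Finally,
   the iterates of a contracting operator strictly decrease until they stabilise, so they are
   injective unless an outcome is reached. *)

definition covers :: "'o::wellorder \<Rightarrow> 'o \<Rightarrow> bool" where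
  "covers x y \<longleftrightarrow> y < x \<and> (\<forall>z. y < z \<longrightarrow> x \<le> z)"

lemma covers_unique: "covers x y \<Longrightarrow> covers x y' \<Longrightarrow> y = y'"
  unfolding covers_def by (meson leD linorder_neqE)

lemma covers_Least: "a < b \<Longrightarrow> covers (LEAST z. a < z) a"
  unfolding covers_def by (auto intro: LeastI Least_le)

lemma iter_rec:
  "iter T R x = (if \<exists>y. covers x y then R (cut (iter T R) {(y, x). y < x} x (THE y. covers x y))
                 else (\<lambda>i. T i \<inter> (\<Inter>y\<in>{y. y < x}. cut (iter T R) {(y, x). y < x} x y i)))"
  unfolding iter_def covers_def[abs_def] by (subst wfrec[OF wf]) (rule refl)

lemma iter_succ:
  assumes "covers x y"
  shows "iter T R x = R (iter T R y)"
proof -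
  have "(THE y. covers x y) = y" using assms covers_unique by blast
  moreover have "y < x" using assms unfolding covers_def by simp
  ultimately show ?thesis using assms by (subst iter_rec) (auto simp: cut_apply)
qed

lemma iter_limit:
  "\<nexists>y. covers x y \<Longrightarrow> iter T R x = (\<lambda>i. T i \<inter> (\<Inter>y\<in>{y. y < x}. iter T R y i))"
  by (subst iter_rec) (auto simp: cut_apply)

lemma iter_restr:
  assumes "is_operator n T R" and "is_restr n T T"
  shows "is_restr n T (iter T R x)"
proof (induction x rule: less_induct)
  case (less x)
  show ?case
  proof (cases "\<exists>y. covers x y")
    case True
    then obtain y where y: "covers x y" by blast
    then have "is_restr n T (iter T R y)" using less.IH unfolding covers_def by blast
    then show ?thesis using iter_succ[OF y, of T R] assms(1) unfolding is_operator_def by simp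
  next
    case False
    then show ?thesis using iter_limit[OF False, of T R] assms(2) unfolding is_restr_def by auto
  qed
qed

lemma le_iter:
  assumes "F \<le> T" and step: "\<And>y::'o::wellorder. F \<le> iter T R y \<Longrightarrow> F \<le> R (iter T R y)"
  shows "F \<le> iter T R (x::'o)"
proof (induction x rule: less_induct)
  case (less x)
  show ?case
  proof (cases "\<exists>y. covers x y")
    case True
    then obtain y where y: "covers x y" by blast
    then have "F \<le> iter T R y" using less.IH unfolding covers_def by blast
    then show ?thesis using iter_succ[OF y, of T R] step by simp
  next
    case False
    then show ?thesis
      using iter_limit[OF False, of T R] less \<open>F \<le> T\<close> by (auto simp: le_fun_def)
  qed
qed

lemma iter_le_iter:
  assumes step: "\<And>y::'o::wellorder. iter T R1 y \<le> iter T R2 y \<Longrightarrow> R1 (iter T R1 y) \<le> R2 (iter T R2 y)"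
  shows "iter T R1 (x::'o) \<le> iter T R2 x"
proof (induction x rule: less_induct)
  case (less x)
  show ?case
  proof (cases "\<exists>y. covers x y")
    case True
    then obtain y where y: "covers x y" by blast
    then have "iter T R1 y \<le> iter T R2 y" using less.IH unfolding covers_def by blast
    then show ?thesis using iter_succ[OF y, of T R1] iter_succ[OF y, of T R2] step by simp
  next
    case False
    then show ?thesis
      unfolding iter_limit[OF False, of T R1] iter_limit[OF False, of T R2]
      using less.IH by (fastforce simp: le_fun_def)
  qed
qed

lemma outcome_at_LEAST:
  assumes "R (iter T R x) = iter T R (x::'o::wellorder)"
  shows "outcome_at T R (LEAST x::'o. R (iter T R x) = iter T R x)"
proof -
  let ?P = "\<lambda>x::'o. R (iter T R x) = iter T R x"
  have "?P (LEAST x. ?P x)" using assms by (rule LeastI)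
  moreover have "\<not> ?P y" if "y < (LEAST x. ?P x)" for y using that by (rule not_less_Least)
  ultimately show ?thesis unfolding outcome_at_def by blast
qed

locale contracting_monotone_operator =
  fixes n :: nat and T :: "nat \<Rightarrow> 's set" and Op :: "(nat \<Rightarrow> 's set) \<Rightarrow> (nat \<Rightarrow> 's set)"
  assumes top_restr: "is_restr n T T"
    and operator: "is_operator n T Op"
    and contracting: "is_restr n T G \<Longrightarrow> Op G \<le> G"
    and monotone: "is_restr n T G1 \<Longrightarrow> is_restr n T G2 \<Longrightarrow> G1 \<le> G2 \<Longrightarrow> Op G1 \<le> Op G2"
begin

lemma restr_iter: "is_restr n T (iter T Op x)"
  using iter_restr[OF operator top_restr] .

lemma iter_antimono: "x \<le> x' \<Longrightarrow> iter T Op x' \<le> iter T Op x"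
proof (induction x' rule: less_induct)
  case (less x')
  show ?case
  proof (cases "x = x'")
    case False
    with less.prems have "x < x'" by simp
    show ?thesis
    proof (cases "\<exists>y. covers x' y")
      case True
      then obtain y where y: "covers x' y" by blast
      with \<open>x < x'\<close> have "x \<le> y" unfolding covers_def by (meson leI leD)
      have "iter T Op x' = Op (iter T Op y)" using iter_succ[OF y] .
      also have "\<dots> \<le> iter T Op y" using contracting restr_iter by blast
      also have "\<dots> \<le> iter T Op x" using less.IH y \<open>x \<le> y\<close> unfolding covers_def by blast
      finally show ?thesis .
    next
      case False
      then show ?thesis using iter_limit[OF False, of T Op] \<open>x < x'\<close> by (auto simp: le_fun_def)
    qed
  qed simp
qed

lemma iter_inj:
  assumes no_fixpoint: "\<And>x::'o::wellorder. Op (iter T Op x) \<noteq> iter T Op x"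
  shows "inj (iter T Op :: 'o \<Rightarrow> _)"
proof -
  have "iter T Op a \<noteq> iter T Op b" if "a < b" for a b :: 'o
  proof
    assume eq: "iter T Op a = iter T Op b"
    define s where "s = (LEAST z. a < z)"
    have s: "covers s a" unfolding s_def using covers_Least[OF that] .
    have "s \<le> b" unfolding s_def using that by (rule Least_le)
    have "iter T Op a \<le> iter T Op s" using eq iter_antimono[OF \<open>s \<le> b\<close>] by simp
    also have "\<dots> = Op (iter T Op a)" using iter_succ[OF s] .
    finally have "iter T Op a \<le> Op (iter T Op a)" .
    with contracting[OF restr_iter] have "Op (iter T Op a) = iter T Op a"
      by (blast intro: order_antisym)
    with no_fixpoint show False by blast
  qed
  then show ?thesis by (metis injI linorder_neqE)
qed

lemma outcome_exists:
  assumes "\<nexists>f::'o::wellorder \<Rightarrow> (nat \<Rightarrow> 's set). inj f"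
  shows "\<exists>x::'o. outcome_at T Op x"
proof (rule ccontr)
  assume "\<nexists>x::'o. outcome_at T Op x"
  then have "Op (iter T Op x) \<noteq> iter T Op x" for x :: 'o using outcome_at_LEAST by blast
  then have "inj (iter T Op :: 'o \<Rightarrow> _)" by (rule iter_inj)
  with assms show False by blast
qed

definition gfix :: "nat \<Rightarrow> 's set" where
  "gfix = (\<lambda>i. \<Union>{G i | G. is_restr n T G \<and> Op G = G})"

lemma restr_gfix: "is_restr n T gfix"
  unfolding gfix_def is_restr_def by blast

lemma fixpoint_le_gfix: "is_restr n T G \<Longrightarrow> Op G = G \<Longrightarrow> G \<le> gfix"
  unfolding gfix_def le_fun_def by blast

lemma gfix_fixpoint: "Op gfix = gfix"
proof (rule order_antisym)
  show "Op gfix \<le> gfix" using contracting restr_gfix .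
  show "gfix \<le> Op gfix"
  proof (rule le_funI, rule subsetI)
    fix i s assume "s \<in> gfix i"
    then obtain G where G: "is_restr n T G" "Op G = G" "s \<in> G i" unfolding gfix_def by blast
    have "Op G \<le> Op gfix" using monotone[OF G(1) restr_gfix fixpoint_le_gfix[OF G(1,2)]] .
    with G show "s \<in> Op gfix i" by (auto simp: le_fun_def)
  qed
qed

lemma gfix_le_iter: "gfix \<le> iter T Op (x::'o::wellorder)"
proof (rule le_iter)
  show "gfix \<le> T" using restr_gfix unfolding is_restr_def le_fun_def by (metis empty_subsetI not_le)
  show "gfix \<le> Op (iter T Op y)" if "gfix \<le> iter T Op y" for y :: 'o
    using monotone[OF restr_gfix restr_iter that] gfix_fixpoint by simp
qed

lemma outcome_eq_gfix:
  assumes "outcome_at T Op x"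
  shows "iter T Op x = gfix"
proof (rule order_antisym)
  show "iter T Op x \<le> gfix"
    using assms fixpoint_le_gfix[OF restr_iter] unfolding outcome_at_def by blast
  show "gfix \<le> iter T Op x" by (rule gfix_le_iter)
qed

lemma iter_le_relaxation:
  assumes "is_operator n T R" and "\<forall>y::'o::wellorder. relax_cond T Op R y"
  shows "iter T Op (x::'o) \<le> iter T R x"
proof (rule iter_le_iter)
  fix y :: 'o
  assume "iter T Op y \<le> iter T R y"
  then have "Op (iter T Op y) \<le> Op (iter T R y)"
    using monotone[OF restr_iter iter_restr[OF assms(1) top_restr]] by blast
  also have "\<dots> \<le> R (iter T R y)" using assms(2) unfolding relax_cond_def by blast
  finally show "Op (iter T Op y) \<le> R (iter T R y)" .
qed

lemma relaxation_outcome_eq_gfix: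
  assumes R: "is_operator n T R" "\<forall>y::'o::wellorder. relax_cond T Op R y"
    and "outcome_at T R (x::'o)"
  shows "iter T R x = gfix"
proof (rule order_antisym)
  have "Op (iter T R x) = iter T R x"
    using assms unfolding outcome_at_def relax_cond_def by blast
  then show "iter T R x \<le> gfix" using fixpoint_le_gfix iter_restr[OF R(1) top_restr] by blast
  show "gfix \<le> iter T R x" using gfix_le_iter iter_le_relaxation[OF R] by (rule order_trans)
qed

end

lemma GRbar_contracting_monotone:
  assumes "strategic_game n T" and "property_A n T Bin"
  shows "contracting_monotone_operator n T (GRbar n T ep Bin)"
proof
  show "is_restr n T T" using assms(1) unfolding strategic_game_def is_restr_def by auto
  show "is_operator n T (GRbar n T ep Bin)"
    unfolding is_operator_def is_restr_def GRbar_def GR_def by auto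
  show "GRbar n T ep Bin G \<le> G" for G unfolding GRbar_def le_fun_def by auto
  fix G1 G2 assume G: "is_restr n T G1" "is_restr n T G2" "G1 \<le> G2"
  then have "\<forall>i<n. Bin i G1 \<subseteq> Bin i G2" using assms(2) unfolding property_A_def by blast
  then have "GR n T ep Bin G1 i \<subseteq> GR n T ep Bin G2 i" for i unfolding GR_def by auto
  with G(3) show "GRbar n T ep Bin G1 \<le> GRbar n T ep Bin G2"
    unfolding GRbar_def le_fun_def by blast
qed

theorem mainTheorem5:
  fixes n :: nat and T :: "nat \<Rightarrow> 's set" and B :: "nat \<Rightarrow> 'b set"
    and ep :: "nat \<Rightarrow> 's \<Rightarrow> 'b \<Rightarrow> real" and Bin :: "nat \<Rightarrow> (nat \<Rightarrow> 's set) \<Rightarrow> 'b set"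
  assumes "strategic_game n T"
    and "belief_structure n T B Bin"
    and "property_A n T Bin"
  shows
    "(\<exists>F. is_restr n T F \<and> GRbar n T ep Bin F = F \<and>
          (\<forall>G. is_restr n T G \<and> GRbar n T ep Bin G = G \<longrightarrow> G \<le> F) \<and>
          (\<forall>x::'o::wellorder. outcome_at T (GRbar n T ep Bin) x \<longrightarrow> iter T (GRbar n T ep Bin) x = F) \<and>
          ((\<nexists>f::'o \<Rightarrow> (nat \<Rightarrow> 's set). inj f) \<longrightarrow> (\<exists>x::'o. outcome_at T (GRbar n T ep Bin) x)))
     \<and>
     (\<forall>R1 R2 (x1::'o) (x2::'o).
        is_operator n T R1 \<and> (\<forall>y::'o. relax_cond T (GRbar n T ep Bin) R1 y) \<and> outcome_at T R1 x1 \<and>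
        is_operator n T R2 \<and> (\<forall>y::'o. relax_cond T (GRbar n T ep Bin) R2 y) \<and> outcome_at T R2 x2
        \<longrightarrow> iter T R1 x1 = iter T R2 x2)
     \<and>
     (\<forall>R. is_operator n T R \<and> (\<forall>y::'o. relax_cond T (GRbar n T ep Bin) R y) \<longrightarrow>
        (\<forall>x::'o. iter T (GRbar n T ep Bin) x \<le> iter T R x))"
proof -
  interpret contracting_monotone_operator n T "GRbar n T ep Bin"
    using GRbar_contracting_monotone[OF assms(1,3)] .
  show ?thesis
  proof (intro conjI exI[of _ gfix] allI impI)
    show "is_restr n T gfix" "GRbar n T ep Bin gfix = gfix"
      by (fact restr_gfix, fact gfix_fixpoint)
  qed (auto intro: fixpoint_le_gfix outcome_eq_gfix outcome_exists iter_le_relaxation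
             simp: relaxation_outcome_eq_gfix)
qed

end
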